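(* Let $\lambda=(\lambda^{(1)},\lambda^{(2)})$ with $\lambda^{(1)},\lambda^{(2)}\in\mathbb R^{\mathcal U_g}_{\ge0}$ and $\mu=(\mu^{(1)}_k,\mu^{(2)}_k)_{k\in[N]}$ with $\mu^{(1)}_k,\mu^{(2)}_k\in\mathbb R^{\mathcal U_{l,k}}_{\ge0}$ be non-negative. Then an optimal solution $\mathbf h^*=(h_1^*,\dots,h_N^* )$ of the inner problem $\min_{\mathbf h\in\mathcal H^N}\mathcal L(\mathbf h,\lambda,\mu)$ is realized by local deterministic classifiers $h^*_k$, $k\in[N]$, satisfying $$h^*_k(x)=e_y,\qquad y\in\arg\max_{j\in[m]}\Big(\sum_{a\in\mathcal A}\mathbb P(A=a\mid X=x,K=k)\,\big[\mathbf M^{\lambda,\mu}(a,k)\big]^\top\eta(x,a,k)\Big)_j,$$ where $$\mathbf M^{\lambda,\mu}(a,k)=\mathbf I-\frac{1}{p_{a,k}}\Big[\sum_{u\in\mathcal U_g}(\lambda^{(1)}_u-\lambda^{(2)}_u)\mathbf D^{a,k}_u+\sum_{u\in\mathcal U_{l,k}}(\mu^{(1)}_{k,u}-\mu^{(2)}_{k,u})\mathbf D^{a,k}_u\Big].$$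
   Context: Let $(X,A,Y,K)$ be a random tuple with $X\in\mathcal X\subseteq\mathbb R^d$, sensitive attribute $A$ in a finite set $\mathcal A$, label $Y\in[m]$ and client index $K\in[N]$; $p_{a,k}=\mathbb P(A=a,K=k)>0$. The Bayes score is $\eta(x,a,k)\in\Delta_m$ with $\eta_y(x,a,k)=\mathbb P(Y=y\mid X=x,A=a,K=k)$, where $\Delta_m$ is the probability simplex in $\mathbb R^m$ and $e_y$ the $y$-th standard basis vector. $\mathcal H=\{h:\mathcal X\to\Delta_m\}$ is the set of (measurable, randomized, attribute-blind) classifiers: given $X=x$, the prediction $\widehat Y$ satisfies $\mathbb P(\widehat Y=j\mid X=x)=h_j(x)$; $h$ is deterministic if its values lie in $\{e_1,\dots,e_m\}$. A federated classifier is $\mathbf h=(h_1,\dots,h_N)\in\mathcal H^N$, client $k$ using $h_k$. Confusion matrices: $\mathbf C^{a,k}_{i,j}(h_k)=\mathbb P(Y=i,\widehat Y=j\mid A=a,K=k)$. $\langle\mathbf A,\mathbf B\rangle=\sum_{i,j}a_{ij}b_{ij}$; $\mathbf 1_{m\times m}$ is the all-ones matrix, $\mathbf I$ the identity. Risk: $\mathcal R(\mathbf h)=\sum_{a,k}p_{a,k}\langle\mathbf 1_{m\times m}-\mathbf I,\mathbf C^{a,k}(h_k)\rangle$. Given finite index sets $\mathcal U_g$, $\mathcal U_{l,k}$ and fixed real $m\times m$ matrices $\mathbf D^{a,k}_u$: $\mathscr D^g_u(\mathbf h)=\sum_{a}\sum_{k}\langle\mathbf D^{a,k}_u,\mathbf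 C^{a,k}(h_k)\rangle$ ($u\in\mathcal U_g$) and $\mathscr D^{l,k}_u(\mathbf h)=\sum_a\langle\mathbf D^{a,k}_u,\mathbf C^{a,k}(h_k)\rangle$ ($u\in\mathcal U_{l,k}$). For constants $\xi^g,\xi^{l,k}>0$, the Lagrangian of the fair problem (minimize $\mathcal R$ subject to $|\mathscr D^g_u|\le\xi^g$ and $|\mathscr D^{l,k}_u|\le\xi^{l,k}$) is $$\mathcal L(\mathbf h,\lambda,\mu)=\mathcal R(\mathbf h)+\sum_{u\in\mathcal U_g}\big[(\lambda^{(1)}_u-\lambda^{(2)}_u)\mathscr D^g_u(\mathbf h)-(\lambda^{(1)}_u+\lambda^{(2)}_u)\xi^g\big]+\sum_{k\in[N]}\sum_{u\in\mathcal U_{l,k}}\big[(\mu^{(1)}_{k,u}-\mu^{(2)}_{k,u})\mathscr D^{l,k}_u(\mathbf h)-(\mu^{(1)}_{k,u}+\mu^{(2)}_{k,u})\xi^{l,k}\big].$$ *)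

theory Defs
  imports "HOL-Probability.Probability"
begin

text \<open>Feature space: a measurable space Mx (the paper's X in a subset of R^d with its Borel sets).
  Sensitive attributes: finite type 'a.  Clients [N]: finite type 'k.  Labels [m]: finite type 'y.
  The joint law of (X,K) is a probability measure nu on Mx x count_space UNIV;
  q x k a = P(A = a | X = x, K = k);  eta x a k i = P(Y = i | X = x, A = a, K = k).
  A federated classifier is h :: 'k => 'x => 'y => real, client k using h k.\<close>

type_synonym 'y mat = "'y \<Rightarrow> 'y \<Rightarrow> real"

definition prob_vec :: "('i::finite \<Rightarrow> real) \<Rightarrow> bool" where
  "prob_vec v \<longleftrightarrow> (\<forall>i. 0 \<le> v i) \<and> (\<Sum>i\<in>UNIV. v i) = 1"

definition basis_vec :: "'i \<Rightarrow> 'i \<Rightarrow> real" where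
  "basis_vec y = (\<lambda>j. if j = y then 1 else 0)"

definition is_classifier :: "'x measure \<Rightarrow> ('x \<Rightarrow> 'y::finite \<Rightarrow> real) \<Rightarrow> bool" where
  "is_classifier Mx h \<longleftrightarrow> (\<forall>j. (\<lambda>x. h x j) \<in> borel_measurable Mx) \<and> (\<forall>x\<in>space Mx. prob_vec (h x))"

definition is_deterministic :: "'x measure \<Rightarrow> ('x \<Rightarrow> 'y::finite \<Rightarrow> real) \<Rightarrow> bool" where
  "is_deterministic Mx h \<longleftrightarrow> (\<forall>x\<in>space Mx. \<exists>y. h x = basis_vec y)"

definition law_XKA :: "('x \<times> 'k) measure \<Rightarrow> ('x \<Rightarrow> 'k \<Rightarrow> 'a \<Rightarrow> real) \<Rightarrow> (('x \<times> 'k) \<times> 'a) measure" where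
  "law_XKA \<nu> q = density (\<nu> \<Otimes>\<^sub>M count_space UNIV) (\<lambda>((x,k),a). ennreal (q x k a))"

text \<open>Joint law of ((X,K),(A,Y,Yhat)) when client k predicts with h k
  (prediction drawn from h k X, independently of (A,Y) given (X,K)).\<close>
definition full_law :: "('x \<times> 'k) measure \<Rightarrow> ('x \<Rightarrow> 'k \<Rightarrow> 'a \<Rightarrow> real) \<Rightarrow>
    ('x \<Rightarrow> 'a \<Rightarrow> 'k \<Rightarrow> 'y \<Rightarrow> real) \<Rightarrow> ('k \<Rightarrow> 'x \<Rightarrow> 'y \<Rightarrow> real) \<Rightarrow>
    (('x \<times> 'k) \<times> ('a \<times> 'y \<times> 'y)) measure" where
  "full_law \<nu> q \<eta> h = density (\<nu> \<Otimes>\<^sub>M count_space UNIV)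
     (\<lambda>((x,k),(a,i,j)). ennreal (q x k a * \<eta> x a k i * h k x j))"

definition pAK :: "('x \<times> 'k) measure \<Rightarrow> ('x \<Rightarrow> 'k \<Rightarrow> 'a \<Rightarrow> real) \<Rightarrow> 'a \<Rightarrow> 'k \<Rightarrow> real" where
  "pAK \<nu> q a k = measure (law_XKA \<nu> q) {z. snd (fst z) = k \<and> snd z = a}"

definition confusion :: "('x \<times> 'k) measure \<Rightarrow> ('x \<Rightarrow> 'k \<Rightarrow> 'a \<Rightarrow> real) \<Rightarrow>
    ('x \<Rightarrow> 'a \<Rightarrow> 'k \<Rightarrow> 'y \<Rightarrow> real) \<Rightarrow> ('k \<Rightarrow> 'x \<Rightarrow> 'y \<Rightarrow> real) \<Rightarrow> 'a \<Rightarrow> 'k \<Rightarrow> 'y mat" where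
  "confusion \<nu> q \<eta> h a k i j =
     (let P = full_law \<nu> q \<eta> h;
          E = {z. snd (fst z) = k \<and> fst (snd z) = a}
      in measure P (E \<inter> {z. fst (snd (snd z)) = i \<and> snd (snd (snd z)) = j}) / measure P E)"

definition mat_inner :: "'y::finite mat \<Rightarrow> 'y mat \<Rightarrow> real" where
  "mat_inner A B = (\<Sum>i\<in>UNIV. \<Sum>j\<in>UNIV. A i j * B i j)"

definition ones_mat :: "'y mat" where "ones_mat = (\<lambda>i j. 1)"
definition id_mat :: "'y mat" where "id_mat = (\<lambda>i j. if i = j then 1 else 0)"

definition risk :: "('x \<times> 'k) measure \<Rightarrow> ('x \<Rightarrow> 'k::finite \<Rightarrow> 'a::finite \<Rightarrow> real) \<Rightarrow>
    ('x \<Rightarrow> 'a \<Rightarrow> 'k \<Rightarrow> 'y::finite \<Rightarrow> real) \<Rightarrow> ('k \<Rightarrow> 'x \<Rightarrow> 'y \<Rightarrow> real) \<Rightarrow> real" where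
  "risk \<nu> q \<eta> h = (\<Sum>a\<in>UNIV. \<Sum>k\<in>UNIV. pAK \<nu> q a k *
      mat_inner (\<lambda>i j. ones_mat i j - id_mat i j) (confusion \<nu> q \<eta> h a k))"

definition global_disp :: "('x \<times> 'k) measure \<Rightarrow> ('x \<Rightarrow> 'k::finite \<Rightarrow> 'a::finite \<Rightarrow> real) \<Rightarrow>
    ('x \<Rightarrow> 'a \<Rightarrow> 'k \<Rightarrow> 'y::finite \<Rightarrow> real) \<Rightarrow> ('u \<Rightarrow> 'a \<Rightarrow> 'k \<Rightarrow> 'y mat) \<Rightarrow> 'u \<Rightarrow>
    ('k \<Rightarrow> 'x \<Rightarrow> 'y \<Rightarrow> real) \<Rightarrow> real" where
  "global_disp \<nu> q \<eta> Dg u h = (\<Sum>a\<in>UNIV. \<Sum>k\<in>UNIV. mat_inner (Dg u a k) (confusion \<nu> q \<eta> h a k))"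

definition local_disp :: "('x \<times> 'k) measure \<Rightarrow> ('x \<Rightarrow> 'k \<Rightarrow> 'a::finite \<Rightarrow> real) \<Rightarrow>
    ('x \<Rightarrow> 'a \<Rightarrow> 'k \<Rightarrow> 'y::finite \<Rightarrow> real) \<Rightarrow> ('k \<Rightarrow> 'v \<Rightarrow> 'a \<Rightarrow> 'y mat) \<Rightarrow> 'k \<Rightarrow> 'v \<Rightarrow>
    ('k \<Rightarrow> 'x \<Rightarrow> 'y \<Rightarrow> real) \<Rightarrow> real" where
  "local_disp \<nu> q \<eta> Dl k u h = (\<Sum>a\<in>UNIV. mat_inner (Dl k u a) (confusion \<nu> q \<eta> h a k))"

definition lagrangian :: "('x \<times> 'k) measure \<Rightarrow> ('x \<Rightarrow> 'k::finite \<Rightarrow> 'a::finite \<Rightarrow> real) \<Rightarrow>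
    ('x \<Rightarrow> 'a \<Rightarrow> 'k \<Rightarrow> 'y::finite \<Rightarrow> real) \<Rightarrow>
    'u set \<Rightarrow> ('k \<Rightarrow> 'v set) \<Rightarrow> ('u \<Rightarrow> 'a \<Rightarrow> 'k \<Rightarrow> 'y mat) \<Rightarrow> ('k \<Rightarrow> 'v \<Rightarrow> 'a \<Rightarrow> 'y mat) \<Rightarrow>
    real \<Rightarrow> ('k \<Rightarrow> real) \<Rightarrow>
    ('k \<Rightarrow> 'x \<Rightarrow> 'y \<Rightarrow> real) \<Rightarrow>
    ('u \<Rightarrow> real) \<Rightarrow> ('u \<Rightarrow> real) \<Rightarrow> ('k \<Rightarrow> 'v \<Rightarrow> real) \<Rightarrow> ('k \<Rightarrow> 'v \<Rightarrow> real) \<Rightarrow> real" where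
  "lagrangian \<nu> q \<eta> Ug Ul Dg Dl \<xi>g \<xi>l h lam1 lam2 mu1 mu2 =
     risk \<nu> q \<eta> h
     + (\<Sum>u\<in>Ug. (lam1 u - lam2 u) * global_disp \<nu> q \<eta> Dg u h - (lam1 u + lam2 u) * \<xi>g)
     + (\<Sum>k\<in>UNIV. \<Sum>u\<in>Ul k. (mu1 k u - mu2 k u) * local_disp \<nu> q \<eta> Dl k u h
                             - (mu1 k u + mu2 k u) * \<xi>l k)"

definition M_mat :: "('x \<times> 'k) measure \<Rightarrow> ('x \<Rightarrow> 'k \<Rightarrow> 'a \<Rightarrow> real) \<Rightarrow>
    'u set \<Rightarrow> ('k \<Rightarrow> 'v set) \<Rightarrow> ('u \<Rightarrow> 'a \<Rightarrow> 'k \<Rightarrow> 'y mat) \<Rightarrow> ('k \<Rightarrow> 'v \<Rightarrow> 'a \<Rightarrow> 'y mat) \<Rightarrow>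
    ('u \<Rightarrow> real) \<Rightarrow> ('u \<Rightarrow> real) \<Rightarrow> ('k \<Rightarrow> 'v \<Rightarrow> real) \<Rightarrow> ('k \<Rightarrow> 'v \<Rightarrow> real) \<Rightarrow>
    'a \<Rightarrow> 'k \<Rightarrow> 'y mat" where
  "M_mat \<nu> q Ug Ul Dg Dl lam1 lam2 mu1 mu2 a k = (\<lambda>i j.
     id_mat i j - (1 / pAK \<nu> q a k) *
       ((\<Sum>u\<in>Ug. (lam1 u - lam2 u) * Dg u a k i j) + (\<Sum>u\<in>Ul k. (mu1 k u - mu2 k u) * Dl k u a i j)))"

definition score :: "('x \<times> 'k) measure \<Rightarrow> ('x \<Rightarrow> 'k \<Rightarrow> 'a::finite \<Rightarrow> real) \<Rightarrow>
    ('x \<Rightarrow> 'a \<Rightarrow> 'k \<Rightarrow> 'y::finite \<Rightarrow> real) \<Rightarrow>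
    'u set \<Rightarrow> ('k \<Rightarrow> 'v set) \<Rightarrow> ('u \<Rightarrow> 'a \<Rightarrow> 'k \<Rightarrow> 'y mat) \<Rightarrow> ('k \<Rightarrow> 'v \<Rightarrow> 'a \<Rightarrow> 'y mat) \<Rightarrow>
    ('u \<Rightarrow> real) \<Rightarrow> ('u \<Rightarrow> real) \<Rightarrow> ('k \<Rightarrow> 'v \<Rightarrow> real) \<Rightarrow> ('k \<Rightarrow> 'v \<Rightarrow> real) \<Rightarrow>
    'x \<Rightarrow> 'k \<Rightarrow> 'y \<Rightarrow> real" where
  "score \<nu> q \<eta> Ug Ul Dg Dl lam1 lam2 mu1 mu2 x k j =
     (\<Sum>a\<in>UNIV. q x k a * (\<Sum>i\<in>UNIV. M_mat \<nu> q Ug Ul Dg Dl lam1 lam2 mu1 mu2 a k i j * \<eta> x a k i))"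

end

theory Submission
  imports Defs
begin

(* For fixed multipliers the Lagrangian is affine in the confusion matrices, and each entry
   C^{a,k}_{i,j}(h) is, up to the factor 1/p_{a,k}, the integral over the law of (X,K) of
   [K = k] q(X,k,a) eta_i(X,a,k) h_j(X).  Collecting the coefficients, which are exactly
   p_{a,k} (1 - M^{lambda,mu}(a,k)_{i,j}), gives
     L(h) = 1 - E[ sum_j h_{K,j}(X) s_j(X,K) ] - (penalty constants)
   with s the score vector of the statement.  Hence L is minimised by putting, at every (x,k),
   all prediction mass on a coordinate maximising s(x,k); breaking ties by the least index
   makes this choice measurable. *)

lemma prob_vec_nonneg: "prob_vec v \<Longrightarrow> 0 \<le> v i"
  unfolding prob_vec_def by blast

lemma prob_vec_le_one: "prob_vec v \<Longrightarrow> v i \<le> 1"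
  unfolding prob_vec_def by (metis finite UNIV_I member_le_sum)

lemma prob_vec_basis_vec: "prob_vec (basis_vec y)"
  unfolding prob_vec_def basis_vec_def by simp

lemma sum_basis_vec_mult: "(\<Sum>j\<in>UNIV. basis_vec y j * s j) = s (y :: 'y::finite)"
  unfolding basis_vec_def by (simp add: if_distrib[of "\<lambda>t. t * _"] cong: if_cong)

lemma prob_vec_mean_le_max:
  assumes "prob_vec w" and "\<And>j. s j \<le> s y"
  shows "(\<Sum>j\<in>UNIV. w j * s j) \<le> s y"
proof -
  have "(\<Sum>j\<in>UNIV. w j * s j) \<le> (\<Sum>j\<in>UNIV. w j * s y)"
    using assms by (intro sum_mono mult_left_mono) (auto intro: prob_vec_nonneg)
  also have "\<dots> = s y"
    using \<open>prob_vec w\<close> by (simp add: sum_distrib_right[symmetric] prob_vec_def)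
  finally show ?thesis .
qed

(* Ties are broken by the least to_nat index, so the maximiser is unique and
   measurable_THE applies. *)
definition is_least_argmax :: "('y::finite \<Rightarrow> real) \<Rightarrow> 'y \<Rightarrow> bool" where
  "is_least_argmax s y \<longleftrightarrow>
     (\<forall>j. s j \<le> s y) \<and> (\<forall>y'. (\<forall>j. s j \<le> s y') \<longrightarrow> to_nat y \<le> to_nat y')"

definition least_argmax :: "('y::finite \<Rightarrow> real) \<Rightarrow> 'y" where
  "least_argmax s = (THE y. is_least_argmax s y)"

lemma ex1_is_least_argmax: "\<exists>!y. is_least_argmax s y"
proof -
  obtain y0 where "\<forall>j. s j \<le> s y0"
    using ex_is_arg_min_if_finite[of UNIV "\<lambda>y. - s y"] by (auto simp: is_arg_min_def not_less)
  then obtain y where "is_least_argmax s y"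
    using ex_has_least_nat[of "\<lambda>y. \<forall>j. s j \<le> s y" y0 to_nat] unfolding is_least_argmax_def by blast
  moreover have "y' = y" if "is_least_argmax s y'" for y'
    using that \<open>is_least_argmax s y\<close> unfolding is_least_argmax_def by (metis le_antisym to_nat_split)
  ultimately show ?thesis by blast
qed

lemma least_argmax_ge: "s j \<le> s (least_argmax s)"
  using theI'[OF ex1_is_least_argmax[of s]] unfolding least_argmax_def is_least_argmax_def by blast

lemma measurable_least_argmax:
  fixes s :: "'x \<Rightarrow> 'y::finite \<Rightarrow> real"
  assumes [measurable]: "\<And>j. (\<lambda>x. s x j) \<in> borel_measurable M"
  shows "(\<lambda>x. least_argmax (s x)) \<in> measurable M (count_space UNIV)"
  unfolding least_argmax_def
proof (rule measurable_THE)
  show "Measurable.pred M (\<lambda>x. is_least_argmax (s x) y)" for y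
    unfolding is_least_argmax_def by measurable
  show "x = y" if "is_least_argmax (s z) x" "is_least_argmax (s z) y" for x y z
    using that ex1_is_least_argmax by blast
qed auto

lemma sum_UNIV_prod: "(\<Sum>b\<in>UNIV. f b) = (\<Sum>y\<in>UNIV. \<Sum>x\<in>UNIV. f (x :: 'p::finite, y :: 'r::finite))"
  by (subst sum.swap) (simp add: sum.cartesian_product)

lemma measure_density_pair_count_space:
  fixes g :: "'z \<Rightarrow> 'b::finite \<Rightarrow> real"
  assumes "finite_measure N" and space_N: "space N = UNIV"
    and [measurable]: "\<And>b. (\<lambda>z. g z b) \<in> borel_measurable N"
    and g_nonneg: "\<And>z b. 0 \<le> g z b" and g_le: "\<And>z b. g z b \<le> B"
    and [measurable]: "\<And>b. Measurable.pred N (\<lambda>z. R z b)"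
  shows "measure (density (N \<Otimes>\<^sub>M count_space UNIV) (\<lambda>w. ennreal (g (fst w) (snd w))))
      {w. R (fst w) (snd w)} = (\<integral>z. (\<Sum>b\<in>UNIV. if R z b then g z b else 0) \<partial>N)"
proof -
  interpret finite_measure N by fact
  interpret C: sigma_finite_measure "count_space (UNIV :: 'b set)"
    by (rule sigma_finite_measure_count_space_finite) simp
  define G where "G z = (\<Sum>b\<in>UNIV. if R z b then g z b else 0)" for z
  have G_nonneg: "0 \<le> G z" for z
    unfolding G_def using g_nonneg by (simp add: sum_nonneg)
  have "G z \<le> (\<Sum>b\<in>(UNIV :: 'b set). B)" for z
    unfolding G_def using g_nonneg g_le by (intro sum_mono) (auto intro: order_trans[OF g_nonneg g_le])
  moreover have "G \<in> borel_measurable N"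
    unfolding G_def by measurable
  ultimately have "integrable N G"
    using G_nonneg by (intro integrable_const_bound[where B="CARD('b) * B"]) auto
  have [measurable]: "(\<lambda>w. g (fst w) (snd w)) \<in> borel_measurable (N \<Otimes>\<^sub>M count_space UNIV)"
    by measurable
  have [measurable]: "{w. R (fst w) (snd w)} \<in> sets (N \<Otimes>\<^sub>M count_space UNIV)"
  proof -
    have "Measurable.pred (N \<Otimes>\<^sub>M count_space UNIV) (\<lambda>w. R (fst w) (snd w))"
      by measurable
    then show ?thesis
      using space_N by (simp add: pred_def space_pair_measure)
  qed
  have "emeasure (density (N \<Otimes>\<^sub>M count_space UNIV) (\<lambda>w. ennreal (g (fst w) (snd w))))
      {w. R (fst w) (snd w)}
    = (\<integral>\<^sup>+ w. ennreal (g (fst w) (snd w)) * indicator {w. R (fst w) (snd w)} w \<partial>(N \<Otimes>\<^sub>M count_space UNIV))"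
    by (rule emeasure_density) measurable
  also have "\<dots> = (\<integral>\<^sup>+ z. \<integral>\<^sup>+ b. ennreal (g z b) * indicator {w. R (fst w) (snd w)} (z, b)
      \<partial>count_space UNIV \<partial>N)"
    using C.nn_integral_fst[of "\<lambda>w. ennreal (g (fst w) (snd w)) * indicator {w. R (fst w) (snd w)} w"]
    by simp
  also have "\<dots> = (\<integral>\<^sup>+ z. ennreal (G z) \<partial>N)"
    unfolding G_def using g_nonneg
    by (simp add: nn_integral_count_space_finite indicator_def of_bool_def if_distrib
        sum_ennreal[symmetric] cong: if_cong)
  also have "\<dots> = ennreal (integral\<^sup>L N G)"
    using \<open>integrable N G\<close> G_nonneg by (intro nn_integral_eq_integral) auto
  finally show ?thesis
    unfolding measure_def G_def[symmetric] using integral_nonneg_AE[of G N] G_nonneg by simp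
qed

lemma mat_inner_sum_left:
  "mat_inner (\<lambda>i j. \<Sum>u\<in>U. f u i j) B = (\<Sum>u\<in>U. mat_inner (f u) B)"
  unfolding mat_inner_def by (simp add: sum_distrib_right sum.swap[of _ U])

lemma mat_inner_add_left:
  "mat_inner (\<lambda>i j. A i j + A' i j) B = mat_inner A B + mat_inner A' B"
  unfolding mat_inner_def by (simp add: distrib_right sum.distrib)

lemma mat_inner_scale_left:
  "mat_inner (\<lambda>i j. c * A i j) B = c * mat_inner A B"
  unfolding mat_inner_def by (simp add: sum_distrib_left mult.assoc)

lemma lagrangian_eq_sum_confusion:
  fixes q :: "'x \<Rightarrow> 'k::finite \<Rightarrow> 'a::finite \<Rightarrow> real"
    and \<eta> :: "'x \<Rightarrow> 'a \<Rightarrow> 'k \<Rightarrow> 'y::finite \<Rightarrow> real"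
  assumes "\<And>a k. pAK \<nu> q a k \<noteq> 0"
  shows "lagrangian \<nu> q \<eta> Ug Ul Dg Dl \<xi>g \<xi>l h lam1 lam2 mu1 mu2
    = (\<Sum>a\<in>UNIV. \<Sum>k\<in>UNIV. pAK \<nu> q a k *
         mat_inner (\<lambda>i j. 1 - M_mat \<nu> q Ug Ul Dg Dl lam1 lam2 mu1 mu2 a k i j) (confusion \<nu> q \<eta> h a k))
      - (\<Sum>u\<in>Ug. (lam1 u + lam2 u) * \<xi>g) - (\<Sum>k\<in>UNIV. \<Sum>u\<in>Ul k. (mu1 k u + mu2 k u) * \<xi>l k)"
proof -
  let ?C = "confusion \<nu> q \<eta> h"
  have "pAK \<nu> q a k * mat_inner (\<lambda>i j. 1 - M_mat \<nu> q Ug Ul Dg Dl lam1 lam2 mu1 mu2 a k i j) (?C a k)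
      = mat_inner (\<lambda>i j. pAK \<nu> q a k * (ones_mat i j - id_mat i j)) (?C a k)
        + (\<Sum>u\<in>Ug. (lam1 u - lam2 u) * mat_inner (Dg u a k) (?C a k))
        + (\<Sum>u\<in>Ul k. (mu1 k u - mu2 k u) * mat_inner (Dl k u a) (?C a k))" for a k
  proof -
    have "(\<lambda>i j. pAK \<nu> q a k * (1 - M_mat \<nu> q Ug Ul Dg Dl lam1 lam2 mu1 mu2 a k i j))
       = (\<lambda>i j. pAK \<nu> q a k * (ones_mat i j - id_mat i j) + (\<Sum>u\<in>Ug. (lam1 u - lam2 u) * Dg u a k i j)
              + (\<Sum>u\<in>Ul k. (mu1 k u - mu2 k u) * Dl k u a i j))"
      using assms[of a k] by (intro ext) (simp add: M_mat_def ones_mat_def field_simps)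
    then show ?thesis
      by (simp add: mat_inner_scale_left[symmetric] mat_inner_add_left mat_inner_sum_left)
  qed
  then have "(\<Sum>a\<in>UNIV. \<Sum>k\<in>UNIV. pAK \<nu> q a k *
         mat_inner (\<lambda>i j. 1 - M_mat \<nu> q Ug Ul Dg Dl lam1 lam2 mu1 mu2 a k i j) (?C a k))
      = risk \<nu> q \<eta> h
        + (\<Sum>a\<in>UNIV. \<Sum>k\<in>UNIV. \<Sum>u\<in>Ug. (lam1 u - lam2 u) * mat_inner (Dg u a k) (?C a k))
        + (\<Sum>a\<in>UNIV. \<Sum>k\<in>UNIV. \<Sum>u\<in>Ul k. (mu1 k u - mu2 k u) * mat_inner (Dl k u a) (?C a k))"
    by (simp add: risk_def sum.distrib mat_inner_scale_left)
  also have "(\<Sum>a\<in>UNIV. \<Sum>k\<in>UNIV. \<Sum>u\<in>Ug. (lam1 u - lam2 u) * mat_inner (Dg u a k) (?C a k))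
      = (\<Sum>u\<in>Ug. (lam1 u - lam2 u) * global_disp \<nu> q \<eta> Dg u h)"
    unfolding global_disp_def sum_distrib_left by (simp add: sum.swap[of _ Ug])
  also have "(\<Sum>a\<in>UNIV. \<Sum>k\<in>UNIV. \<Sum>u\<in>Ul k. (mu1 k u - mu2 k u) * mat_inner (Dl k u a) (?C a k))
      = (\<Sum>k\<in>UNIV. \<Sum>u\<in>Ul k. (mu1 k u - mu2 k u) * local_disp \<nu> q \<eta> Dl k u h)"
    unfolding local_disp_def sum_distrib_left by (subst sum.swap) (simp add: sum.swap[of _ "Ul _"])
  finally show ?thesis
    unfolding lagrangian_def by (simp add: sum_subtractf)
qed

lemma sum_one_minus_M_mat_eq:
  assumes q: "prob_vec (q x k)" and \<eta>: "\<And>a. prob_vec (\<eta> x a k)" and w: "prob_vec w"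
  shows "(\<Sum>a\<in>UNIV. \<Sum>i\<in>UNIV. \<Sum>j\<in>UNIV.
            (1 - M_mat \<nu> q Ug Ul Dg Dl lam1 lam2 mu1 mu2 a k i j) * (q x k a * \<eta> x a k i * w j))
    = 1 - (\<Sum>j\<in>UNIV. w j * score \<nu> q \<eta> Ug Ul Dg Dl lam1 lam2 mu1 mu2 x k j)"
proof -
  let ?M = "M_mat \<nu> q Ug Ul Dg Dl lam1 lam2 mu1 mu2"
  have "(\<Sum>a\<in>UNIV. \<Sum>i\<in>UNIV. \<Sum>j\<in>UNIV. q x k a * \<eta> x a k i * w j)
      = (\<Sum>a\<in>UNIV. q x k a * (\<Sum>i\<in>UNIV. \<eta> x a k i * (\<Sum>j\<in>UNIV. w j)))"
    by (simp add: sum_distrib_left mult.assoc)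
  also have "\<dots> = 1"
    using q \<eta> w by (simp add: prob_vec_def)
  finally have total_mass: "(\<Sum>a\<in>UNIV. \<Sum>i\<in>UNIV. \<Sum>j\<in>UNIV. q x k a * \<eta> x a k i * w j) = 1" .
  have "(\<Sum>a\<in>UNIV. \<Sum>i\<in>UNIV. \<Sum>j\<in>UNIV. ?M a k i j * (q x k a * \<eta> x a k i * w j))
      = (\<Sum>j\<in>UNIV. \<Sum>a\<in>UNIV. \<Sum>i\<in>UNIV. ?M a k i j * (q x k a * \<eta> x a k i * w j))"
    by (subst sum.swap) (simp only: sum.swap[of _ "UNIV :: 'a set"])
  also have "\<dots> = (\<Sum>j\<in>UNIV. w j * score \<nu> q \<eta> Ug Ul Dg Dl lam1 lam2 mu1 mu2 x k j)"
    unfolding score_def by (simp add: sum_distrib_left mult_ac)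
  finally show ?thesis
    by (simp add: left_diff_distrib sum_subtractf total_mass)
qed

definition predicted_score ::
    "('x \<Rightarrow> 'k \<Rightarrow> 'y::finite \<Rightarrow> real) \<Rightarrow> ('k \<Rightarrow> 'x \<Rightarrow> 'y \<Rightarrow> real) \<Rightarrow> 'x \<times> 'k \<Rightarrow> real" where "predicted_score s h z = (\<Sum>j\<in>UNIV. h (snd z) (fst z) j * s (fst z) (snd z) j)"

(* A non-measurable set has measure 0, so p_{a,k} \<noteq> 0 forces the event {K = k, A = a},
   which contains ((x, k), a) for every x, into the sample space. *)
lemma space_eq_UNIV_if_pAK_nonzero:
  fixes q :: "'x \<Rightarrow> 'k \<Rightarrow> 'a \<Rightarrow> real"
  assumes "sets \<nu> = sets (Mx \<Otimes>\<^sub>M count_space UNIV)" and "pAK \<nu> q a k \<noteq> 0"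
  shows "space Mx = UNIV"
proof -
  let ?E = "{z :: ('x \<times> 'k) \<times> 'a. snd (fst z) = k \<and> snd z = a}"
  have "?E \<in> sets (law_XKA \<nu> q)"
    using assms(2) measure_notin_sets unfolding pAK_def by blast
  then have "?E \<subseteq> space (law_XKA \<nu> q)"
    by (rule sets.sets_into_space)
  moreover have "space (law_XKA \<nu> q) = (space Mx \<times> UNIV) \<times> UNIV"
    using sets_eq_imp_space_eq[OF assms(1)] by (simp add: law_XKA_def space_pair_measure)
  ultimately have "((x, k), a) \<in> (space Mx \<times> UNIV) \<times> UNIV" for x
    by (simp add: subset_eq)
  then show ?thesis
    by auto
qed

locale federated_data =
  fixes Mx :: "'x measure"
    and \<nu> :: "('x \<times> 'k::finite) measure"
    and q :: "'x \<Rightarrow> 'k \<Rightarrow> 'a::finite \<Rightarrow> real"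
    and \<eta> :: "'x \<Rightarrow> 'a \<Rightarrow> 'k \<Rightarrow> 'y::finite \<Rightarrow> real"
  assumes prob_space_\<nu>: "prob_space \<nu>"
    and sets_\<nu>: "sets \<nu> = sets (Mx \<Otimes>\<^sub>M count_space UNIV)"
    and space_Mx: "space Mx = UNIV"
    and q_measurable[measurable]: "\<And>k a. (\<lambda>x. q x k a) \<in> borel_measurable Mx"
    and prob_vec_q: "\<And>x k. prob_vec (q x k)"
    and \<eta>_measurable[measurable]: "\<And>a k i. (\<lambda>x. \<eta> x a k i) \<in> borel_measurable Mx"
    and prob_vec_\<eta>: "\<And>x a k. prob_vec (\<eta> x a k)"
begin

lemma space_\<nu>: "space \<nu> = UNIV"
  using sets_eq_imp_space_eq[OF sets_\<nu>] space_Mx by (simp add: space_pair_measure)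

lemma measurable_\<nu>: "measurable \<nu> = measurable (Mx \<Otimes>\<^sub>M count_space UNIV)"
  by (intro ext measurable_cong_sets sets_\<nu> refl)

lemma finite_measure_\<nu>: "finite_measure \<nu>"
  using prob_space_\<nu> by (rule prob_space.axioms(1))

lemma pAK_eq_integral: "pAK \<nu> q a k = (\<integral>z. (if snd z = k then q (fst z) k a else 0) \<partial>\<nu>)"
proof -
  have "law_XKA \<nu> q
      = density (\<nu> \<Otimes>\<^sub>M count_space UNIV) (\<lambda>w. ennreal (q (fst (fst w)) (snd (fst w)) (snd w)))"
    unfolding law_XKA_def by (simp add: split_beta')
  then have "pAK \<nu> q a k
      = (\<integral>z. (\<Sum>b\<in>UNIV. if snd z = k \<and> b = a then q (fst z) (snd z) b else 0) \<partial>\<nu>)"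
    unfolding pAK_def
    by (simp, intro measure_density_pair_count_space[where B=1] finite_measure_\<nu> space_\<nu>)
      (auto simp: measurable_\<nu> intro: prob_vec_nonneg prob_vec_le_one prob_vec_q)
  also have "\<dots> = (\<integral>z. (if snd z = k then q (fst z) k a else 0) \<partial>\<nu>)"
    by (intro Bochner_Integration.integral_cong) (auto simp: sum.delta')
  finally show ?thesis .
qed

lemma classifier_measurable: "is_classifier Mx h \<Longrightarrow> (\<lambda>x. h x j) \<in> borel_measurable Mx"
  unfolding is_classifier_def by blast

lemma classifier_prob_vec: "is_classifier Mx h \<Longrightarrow> prob_vec (h x)"
  unfolding is_classifier_def space_Mx by blast

definition joint_density :: "('k \<Rightarrow> 'x \<Rightarrow> 'y \<Rightarrow> real) \<Rightarrow> 'a \<Rightarrow> 'k \<Rightarrow> 'y \<Rightarrow> 'y \<Rightarrow> 'x \<times> 'k \<Rightarrow> real" where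
  "joint_density h a k i j z =
     (if snd z = k then q (fst z) k a * \<eta> (fst z) a k i * h k (fst z) j else 0)"

lemma measure_full_law:
  assumes h: "\<And>k. is_classifier Mx (h k)" and R: "\<And>b. Measurable.pred \<nu> (\<lambda>z. R z b)"
  shows "measure (full_law \<nu> q \<eta> h) {w. R (fst w) (snd w)}
    = (\<integral>z. (\<Sum>b\<in>UNIV. if R z b then q (fst z) (snd z) (fst b) * \<eta> (fst z) (fst b) (snd z) (fst (snd b))
                                    * h (snd z) (fst z) (snd (snd b)) else 0) \<partial>\<nu>)"
proof -
  note [measurable] = classifier_measurable[OF h]
  define g where "g z b = q (fst z) (snd z) (fst b) * \<eta> (fst z) (fst b) (snd z) (fst (snd b))
      * h (snd z) (fst z) (snd (snd b))" for z :: "'x \<times> 'k" and b :: "'a \<times> 'y \<times> 'y"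
  have "0 \<le> g z b" and "g z b \<le> 1" for z b
    unfolding g_def using prob_vec_q prob_vec_\<eta> classifier_prob_vec[OF h]
    by (simp_all add: mult_le_one prob_vec_le_one prob_vec_nonneg)
  moreover have "full_law \<nu> q \<eta> h = density (\<nu> \<Otimes>\<^sub>M count_space UNIV) (\<lambda>w. ennreal (g (fst w) (snd w)))"
    unfolding full_law_def g_def by (simp add: split_beta')
  ultimately show ?thesis
    unfolding g_def[symmetric]
    by (simp, intro measure_density_pair_count_space[where B=1] finite_measure_\<nu> space_\<nu> R)
      (auto simp: measurable_\<nu> g_def)
qed

lemma confusion_eq_integral:
  assumes h: "\<And>k. is_classifier Mx (h k)"
  shows "confusion \<nu> q \<eta> h a k i j = integral\<^sup>L \<nu> (joint_density h a k i j) / pAK \<nu> q a k"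
proof -
  have cell: "measure (full_law \<nu> q \<eta> h) {w. snd (fst w) = k \<and> snd w = (a, i, j)}
      = integral\<^sup>L \<nu> (joint_density h a k i j)"
    by (subst measure_full_law[OF h]) (auto simp: measurable_\<nu> sum.delta' joint_density_def
        intro: Bochner_Integration.integral_cong)
  have marginal: "measure (full_law \<nu> q \<eta> h) {w. snd (fst w) = k \<and> fst (snd w) = a}
      = (\<integral>z. (if snd z = k then q (fst z) k a else 0) \<partial>\<nu>)"
    \<comment> \<open>summing out the label and the prediction leaves the marginal of \<open>(K, A)\<close>\<close>
    using prob_vec_\<eta> classifier_prob_vec[OF h]
    by (subst measure_full_law[OF h]) (auto simp: measurable_\<nu> sum_UNIV_prod sum.delta
        sum_distrib_left[symmetric] sum_distrib_right[symmetric] prob_vec_def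
        cong: if_cong intro!: Bochner_Integration.integral_cong)
  have cell_event: "{z. snd (fst z) = k \<and> fst (snd z) = a}
      \<inter> {z. fst (snd (snd z)) = i \<and> snd (snd (snd z)) = j} = {w. snd (fst w) = k \<and> snd w = (a, i, j)}"
    by auto
  show ?thesis
    unfolding confusion_def Let_def cell_event cell marginal pAK_eq_integral ..
qed

lemma integrable_joint_density:
  assumes h: "\<And>k. is_classifier Mx (h k)"
  shows "integrable \<nu> (joint_density h a k i j)"
proof -
  interpret finite_measure \<nu> by (rule finite_measure_\<nu>)
  note [measurable] = classifier_measurable[OF h]
  have "joint_density h a k i j \<in> borel_measurable \<nu>"
    unfolding joint_density_def measurable_\<nu> by measurable
  moreover have "norm (joint_density h a k i j z) \<le> 1" for z
    unfolding joint_density_def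
    by (simp add: abs_mult mult_le_one prob_vec_le_one prob_vec_nonneg prob_vec_q prob_vec_\<eta>
        classifier_prob_vec h)
  ultimately show ?thesis
    by (intro integrable_const_bound[where B=1]) auto
qed

lemma sum_joint_density_eq_one_minus_predicted_score:
  assumes h: "\<And>k. is_classifier Mx (h k)"
  shows "(\<Sum>a\<in>UNIV. \<Sum>k\<in>UNIV. \<Sum>i\<in>UNIV. \<Sum>j\<in>UNIV.
            (1 - M_mat \<nu> q Ug Ul Dg Dl lam1 lam2 mu1 mu2 a k i j) * joint_density h a k i j z)
    = 1 - predicted_score (score \<nu> q \<eta> Ug Ul Dg Dl lam1 lam2 mu1 mu2) h z"
proof -
  let ?M = "M_mat \<nu> q Ug Ul Dg Dl lam1 lam2 mu1 mu2"
  obtain x k' where z: "z = (x, k')"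
    by (cases z)
  have "(\<Sum>i\<in>UNIV. \<Sum>j\<in>UNIV. (1 - ?M a k i j) * joint_density h a k i j z)
      = (if k = k' then (\<Sum>i\<in>UNIV. \<Sum>j\<in>UNIV. (1 - ?M a k i j) * (q x k a * \<eta> x a k i * h k x j)) else 0)"
    for a k
    by (cases "k = k'") (auto simp: joint_density_def z)
  then have "(\<Sum>a\<in>UNIV. \<Sum>k\<in>UNIV. \<Sum>i\<in>UNIV. \<Sum>j\<in>UNIV. (1 - ?M a k i j) * joint_density h a k i j z)
      = (\<Sum>a\<in>UNIV. \<Sum>i\<in>UNIV. \<Sum>j\<in>UNIV. (1 - ?M a k' i j) * (q x k' a * \<eta> x a k' i * h k' x j))"
    by (simp add: sum.delta')
  also have "\<dots> = 1 - predicted_score (score \<nu> q \<eta> Ug Ul Dg Dl lam1 lam2 mu1 mu2) h z"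
    unfolding predicted_score_def z
    by (simp add: sum_one_minus_M_mat_eq prob_vec_q prob_vec_\<eta> classifier_prob_vec h)
  finally show ?thesis .
qed

lemma lagrangian_eq_integral_predicted_score:
  assumes h: "\<And>k. is_classifier Mx (h k)" and pAK_nonzero: "\<And>a k. pAK \<nu> q a k \<noteq> 0"
  shows "integrable \<nu> (predicted_score (score \<nu> q \<eta> Ug Ul Dg Dl lam1 lam2 mu1 mu2) h)"
    and "lagrangian \<nu> q \<eta> Ug Ul Dg Dl \<xi>g \<xi>l h lam1 lam2 mu1 mu2
      = 1 - integral\<^sup>L \<nu> (predicted_score (score \<nu> q \<eta> Ug Ul Dg Dl lam1 lam2 mu1 mu2) h)
        - (\<Sum>u\<in>Ug. (lam1 u + lam2 u) * \<xi>g) - (\<Sum>k\<in>UNIV. \<Sum>u\<in>Ul k. (mu1 k u + mu2 k u) * \<xi>l k)"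
proof -
  interpret prob_space \<nu> by (rule prob_space_\<nu>)
  let ?M = "M_mat \<nu> q Ug Ul Dg Dl lam1 lam2 mu1 mu2"
  let ?s = "score \<nu> q \<eta> Ug Ul Dg Dl lam1 lam2 mu1 mu2"
  define F where "F z = (\<Sum>a\<in>UNIV. \<Sum>k\<in>UNIV. \<Sum>i\<in>UNIV. \<Sum>j\<in>UNIV.
      (1 - ?M a k i j) * joint_density h a k i j z)" for z
  have F_integrable: "integrable \<nu> F"
    unfolding F_def by (simp add: integrable_joint_density h)
  have predicted_score_eq: "predicted_score ?s h = (\<lambda>z. 1 - F z)"
    unfolding F_def sum_joint_density_eq_one_minus_predicted_score[OF h] by simp
  then show "integrable \<nu> (predicted_score ?s h)"
    using F_integrable by simp
  have "(\<Sum>a\<in>UNIV. \<Sum>k\<in>UNIV. pAK \<nu> q a k * mat_inner (\<lambda>i j. 1 - ?M a k i j) (confusion \<nu> q \<eta> h a k))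
      = (\<Sum>a\<in>UNIV. \<Sum>k\<in>UNIV. \<Sum>i\<in>UNIV. \<Sum>j\<in>UNIV. (1 - ?M a k i j) * integral\<^sup>L \<nu> (joint_density h a k i j))"
    by (simp add: mat_inner_def confusion_eq_integral h pAK_nonzero sum_distrib_left)
  also have "\<dots> = integral\<^sup>L \<nu> F"
    unfolding F_def by (simp add: integrable_joint_density h)
  also have "\<dots> = 1 - integral\<^sup>L \<nu> (predicted_score ?s h)"
    using F_integrable by (simp add: predicted_score_eq prob_space)
  finally show "lagrangian \<nu> q \<eta> Ug Ul Dg Dl \<xi>g \<xi>l h lam1 lam2 mu1 mu2
      = 1 - integral\<^sup>L \<nu> (predicted_score ?s h)
        - (\<Sum>u\<in>Ug. (lam1 u + lam2 u) * \<xi>g) - (\<Sum>k\<in>UNIV. \<Sum>u\<in>Ul k. (mu1 k u + mu2 k u) * \<xi>l k)"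
    by (simp add: lagrangian_eq_sum_confusion pAK_nonzero)
qed

lemma score_measurable: "(\<lambda>x. score \<nu> q \<eta> Ug Ul Dg Dl lam1 lam2 mu1 mu2 x k j) \<in> borel_measurable Mx"
  unfolding score_def by measurable

lemma lagrangian_le_if_score_maximizer:
  assumes pAK_nonzero: "\<And>a k. pAK \<nu> q a k \<noteq> 0"
    and hs: "\<And>k. is_classifier Mx (hs k)"
    and hs_maximizes: "\<And>k x. \<exists>y. hs k x = basis_vec y \<and>
          (\<forall>j. score \<nu> q \<eta> Ug Ul Dg Dl lam1 lam2 mu1 mu2 x k j
                \<le> score \<nu> q \<eta> Ug Ul Dg Dl lam1 lam2 mu1 mu2 x k y)"
    and h: "\<And>k. is_classifier Mx (h k)"
  shows "lagrangian \<nu> q \<eta> Ug Ul Dg Dl \<xi>g \<xi>l hs lam1 lam2 mu1 mu2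
      \<le> lagrangian \<nu> q \<eta> Ug Ul Dg Dl \<xi>g \<xi>l h lam1 lam2 mu1 mu2"
proof -
  let ?s = "score \<nu> q \<eta> Ug Ul Dg Dl lam1 lam2 mu1 mu2"
  have "predicted_score ?s h z \<le> predicted_score ?s hs z" for z
  proof -
    obtain y where "hs (snd z) (fst z) = basis_vec y"
      and "\<And>j. ?s (fst z) (snd z) j \<le> ?s (fst z) (snd z) y"
      using hs_maximizes by blast
    then show ?thesis
      unfolding predicted_score_def
      using prob_vec_mean_le_max[OF classifier_prob_vec[OF h]] by (simp add: sum_basis_vec_mult)
  qed
  then have "integral\<^sup>L \<nu> (predicted_score ?s h) \<le> integral\<^sup>L \<nu> (predicted_score ?s hs)"
    by (intro integral_mono lagrangian_eq_integral_predicted_score(1) h hs pAK_nonzero)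
  then show ?thesis
    by (simp add: lagrangian_eq_integral_predicted_score(2) h hs pAK_nonzero)
qed

end

theorem proposition2:
  fixes Mx :: "'x measure"
    and \<nu> :: "('x \<times> 'k::finite) measure"
    and q :: "'x \<Rightarrow> 'k \<Rightarrow> 'a::finite \<Rightarrow> real"
    and \<eta> :: "'x \<Rightarrow> 'a \<Rightarrow> 'k \<Rightarrow> 'y::finite \<Rightarrow> real"
    and Ug :: "'u set" and Ul :: "'k \<Rightarrow> 'v set"
    and Dg :: "'u \<Rightarrow> 'a \<Rightarrow> 'k \<Rightarrow> 'y mat" and Dl :: "'k \<Rightarrow> 'v \<Rightarrow> 'a \<Rightarrow> 'y mat"
    and \<xi>g :: real and \<xi>l :: "'k \<Rightarrow> real"
    and lam1 lam2 :: "'u \<Rightarrow> real" and mu1 mu2 :: "'k \<Rightarrow> 'v \<Rightarrow> real"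
  assumes nu_prob: "prob_space \<nu>"
    and nu_sets: "sets \<nu> = sets (Mx \<Otimes>\<^sub>M count_space UNIV)"
    and q_meas: "\<And>k a. (\<lambda>x. q x k a) \<in> borel_measurable Mx"
    and q_prob: "\<And>x k. x \<in> space Mx \<Longrightarrow> prob_vec (q x k)"
    and eta_meas: "\<And>a k i. (\<lambda>x. \<eta> x a k i) \<in> borel_measurable Mx"
    and eta_prob: "\<And>x a k. x \<in> space Mx \<Longrightarrow> prob_vec (\<eta> x a k)"
    and p_pos: "\<And>a k. pAK \<nu> q a k > 0"
    and Ug_fin: "finite Ug" and Ul_fin: "\<And>k. finite (Ul k)"
    and xi_pos: "\<xi>g > 0" "\<And>k. \<xi>l k > 0"
    and lam_nonneg: "\<And>u. u \<in> Ug \<Longrightarrow> lam1 u \<ge> 0 \<and> lam2 u \<ge> 0"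
    and mu_nonneg: "\<And>k u. u \<in> Ul k \<Longrightarrow> mu1 k u \<ge> 0 \<and> mu2 k u \<ge> 0"
  shows "(\<exists>hs :: 'k \<Rightarrow> 'x \<Rightarrow> 'y \<Rightarrow> real.
            (\<forall>k. is_classifier Mx (hs k) \<and> is_deterministic Mx (hs k)) \<and>
            (\<forall>k. \<forall>x\<in>space Mx. \<exists>y. hs k x = basis_vec y \<and>
                 (\<forall>j. score \<nu> q \<eta> Ug Ul Dg Dl lam1 lam2 mu1 mu2 x k j
                      \<le> score \<nu> q \<eta> Ug Ul Dg Dl lam1 lam2 mu1 mu2 x k y)))
       \<and> (\<forall>hs :: 'k \<Rightarrow> 'x \<Rightarrow> 'y \<Rightarrow> real.
            (\<forall>k. is_classifier Mx (hs k)) \<and>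
            (\<forall>k. \<forall>x\<in>space Mx. \<exists>y. hs k x = basis_vec y \<and>
                 (\<forall>j. score \<nu> q \<eta> Ug Ul Dg Dl lam1 lam2 mu1 mu2 x k j
                      \<le> score \<nu> q \<eta> Ug Ul Dg Dl lam1 lam2 mu1 mu2 x k y))
          \<longrightarrow> (\<forall>h :: 'k \<Rightarrow> 'x \<Rightarrow> 'y \<Rightarrow> real. (\<forall>k. is_classifier Mx (h k)) \<longrightarrow>
                 lagrangian \<nu> q \<eta> Ug Ul Dg Dl \<xi>g \<xi>l hs lam1 lam2 mu1 mu2
                 \<le> lagrangian \<nu> q \<eta> Ug Ul Dg Dl \<xi>g \<xi>l h lam1 lam2 mu1 mu2))"
proof -
  have pAK_nonzero: "pAK \<nu> q a k \<noteq> 0" for a k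
    using p_pos[of a k] by simp
  have space_Mx: "space Mx = UNIV"
    by (rule space_eq_UNIV_if_pAK_nonzero[OF nu_sets pAK_nonzero])
  interpret federated_data Mx \<nu> q \<eta>
    using nu_prob nu_sets space_Mx q_meas q_prob eta_meas eta_prob by (simp add: federated_data_def)
  let ?s = "score \<nu> q \<eta> Ug Ul Dg Dl lam1 lam2 mu1 mu2"
  define hs where "hs k x = basis_vec (least_argmax (?s x k))" for k x
  have "is_classifier Mx (hs k)" for k
  proof -
    note [measurable] = measurable_least_argmax[OF score_measurable]
    have "(\<lambda>x. hs k x j) \<in> borel_measurable Mx" for j
      unfolding hs_def basis_vec_def by measurable
    then show ?thesis
      unfolding is_classifier_def hs_def by (simp add: prob_vec_basis_vec)
  qed
  moreover have "is_deterministic Mx (hs k)" for k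
    unfolding is_deterministic_def hs_def by blast
  moreover have "\<exists>y. hs k x = basis_vec y \<and> (\<forall>j. ?s x k j \<le> ?s x k y)" for k x
    unfolding hs_def using least_argmax_ge by blast
  ultimately show ?thesis
    unfolding space_Mx ball_UNIV
    by (intro conjI exI[of _ hs] allI impI)
      (auto intro: lagrangian_le_if_score_maximizer[OF pAK_nonzero])
qed

end
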